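(* Let $P$ be a finite self-dual poset admitting an order-reversing involution $\kappa:P\to P$. For $I\in\mathcal J(P)$ let $I'$ be the order ideal generated by $\kappa(\max(I))$. Let $I\in\mathcal J(P)$ and $\ell\in P$, and for a rowmotion orbit $\mathcal O$ write $(\chi_\ell-\chi_{\kappa(\ell)})(\mathcal O)=\sum_{J\in\mathcal O}(\chi_\ell(J)-\chi_{\kappa(\ell)}(J))$. (1) If $I,I'\in\mathcal O$ for some rowmotion orbit $\mathcal O$, then $(\chi_\ell-\chi_{\kappa(\ell)})(\mathcal O)=0$. (2) If $I\in\mathcal O$ and $I'\in\mathcal O'$ for rowmotion orbits $\mathcal O\neq\mathcal O'$, then $\#\mathcal O=\#\mathcal O'$ and $(\chi_\ell-\chi_{\kappa(\ell)})(\mathcal O)+(\chi_\ell-\chi_{\kappa(\ell)})(\mathcal O')=0$.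
   Context: $\mathcal J(P)$ is the set of order ideals of $P$; rowmotion $\rho:\mathcal J(P)\to\mathcal J(P)$ sends $I$ to the order ideal generated by $\min(P\setminus I)$, and a rowmotion orbit is an orbit of $\rho$. For $q\in P$, $\chi_q(I)=1$ if $q\in\max(I)$ and $0$ otherwise. *)

theory Defs
  imports Main
begin

text \<open>The finite poset P is modelled as a finite type with a partial order; P = UNIV.\<close>

definition order_ideals :: "('a::order) set set" where
  "order_ideals = {I. \<forall>x y. y \<in> I \<longrightarrow> x \<le> y \<longrightarrow> x \<in> I}"

definition maxs :: "('a::order) set \<Rightarrow> 'a set" where
  "maxs S = {x \<in> S. \<forall>y\<in>S. x \<le> y \<longrightarrow> y = x}"

definition mins :: "('a::order) set \<Rightarrow> 'a set" where
  "mins S = {x \<in> S. \<forall>y\<in>S. y \<le> x \<longrightarrow> y = x}"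

definition ideal_gen :: "('a::order) set \<Rightarrow> 'a set" where
  "ideal_gen S = {x. \<exists>y\<in>S. x \<le> y}"

definition rowmotion :: "('a::order) set \<Rightarrow> 'a set" where
  "rowmotion I = ideal_gen (mins (UNIV - I))"

definition rm_orbit_of :: "('a::order) set \<Rightarrow> 'a set set" where
  "rm_orbit_of I = {(rowmotion ^^ n) I | n. True}"

definition is_rm_orbit :: "('a::order) set set \<Rightarrow> bool" where
  "is_rm_orbit Orb \<longleftrightarrow> (\<exists>I\<in>order_ideals. Orb = rm_orbit_of I)"

definition chi :: "('a::order) \<Rightarrow> 'a set \<Rightarrow> int" where
  "chi q I = (if q \<in> maxs I then 1 else 0)"

definition chi_diff_sum :: "('a::order) \<Rightarrow> 'a \<Rightarrow> 'a set set \<Rightarrow> int" where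
  "chi_diff_sum l l' Orb = (\<Sum>J\<in>Orb. chi l J - chi l' J)"

end

theory Submission
  imports Defs
begin

(* Rowmotion is injective on J(P), because I is recovered from min (P - I) = max \<rho>(I); so on
   the finite set J(P) it is a permutation and its orbits are cycles. The map I \<mapsto> I' is an
   involution of J(P) with max I' = \<kappa>(max I), and it conjugates rowmotion to its inverse:
   \<rho>(I)' is the complement of \<kappa>(I), and \<rho> of that complement is generated by
   min \<kappa>(I) = \<kappa>(max I), i.e. \<rho>(\<rho>(I)') = I'. Hence I \<mapsto> I' maps the orbit of I
   bijectively onto the orbit of I'. Since \<chi>_q(I') = \<chi>_\<kappa>(q)(I), the sum of
   \<chi>_\<ell> - \<chi>_\<kappa>(\<ell>) over the orbit of I' is the negative of the sum over the orbit of I,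
   and it vanishes when the two orbits coincide. *)

lemma ideal_gen_in_order_ideals: "ideal_gen S \<in> order_ideals"
  unfolding ideal_gen_def order_ideals_def using order_trans by blast

lemma rowmotion_in_order_ideals: "rowmotion I \<in> order_ideals"
  unfolding rowmotion_def by (rule ideal_gen_in_order_ideals)

lemma funpow_rowmotion_in_order_ideals:
  "I \<in> order_ideals \<Longrightarrow> (rowmotion ^^ n) I \<in> order_ideals"
  by (induction n) (auto simp: rowmotion_in_order_ideals)

lemma maxs_ideal_gen: "maxs (ideal_gen S) = maxs S"
  unfolding maxs_def ideal_gen_def by (auto intro: order_trans dest: antisym)

lemma mins_maxs: "mins (maxs S) = maxs S"
  unfolding mins_def maxs_def by auto

lemma maxs_mins: "maxs (mins S) = mins S"
  unfolding mins_def maxs_def by auto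

lemma maxs_rowmotion: "maxs (rowmotion I) = mins (UNIV - I)"
  unfolding rowmotion_def by (simp add: maxs_ideal_gen maxs_mins)

lemma ideal_gen_maxs:
  fixes I :: "'a::{order,finite} set"
  assumes "I \<in> order_ideals"
  shows "ideal_gen (maxs I) = I"
proof
  show "ideal_gen (maxs I) \<subseteq> I"
    using assms unfolding ideal_gen_def maxs_def order_ideals_def by blast
  show "I \<subseteq> ideal_gen (maxs I)"
  proof
    fix x assume "x \<in> I"
    then obtain m where "m \<in> I" "x \<le> m" "\<forall>y\<in>I. m \<le> y \<longrightarrow> m = y"
      using finite_has_maximal2[of I x] by auto
    then show "x \<in> ideal_gen (maxs I)"
      unfolding ideal_gen_def maxs_def by auto
  qed
qed

lemma order_ideal_eq_not_above_mins_compl: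
  fixes I :: "'a::{order,finite} set"
  assumes "I \<in> order_ideals"
  shows "I = {x. \<forall>m\<in>mins (UNIV - I). \<not> m \<le> x}"
proof (intro set_eqI iffI)
  fix x assume "x \<in> I"
  then show "x \<in> {x. \<forall>m\<in>mins (UNIV - I). \<not> m \<le> x}"
    using assms unfolding mins_def order_ideals_def by blast
next
  fix x assume x: "x \<in> {x. \<forall>m\<in>mins (UNIV - I). \<not> m \<le> x}"
  show "x \<in> I"
  proof (rule ccontr)
    assume "x \<notin> I"
    then obtain m where "m \<in> UNIV - I" "m \<le> x" "\<forall>y\<in>UNIV - I. y \<le> m \<longrightarrow> m = y"
      using finite_has_minimal2[of "UNIV - I" x] by auto
    then show False
      using x unfolding mins_def by auto
  qed
qed

lemma bij_betw_rowmotion: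
  "bij_betw rowmotion (order_ideals :: 'a::{order,finite} set set) order_ideals"
proof -
  have "inj_on rowmotion (order_ideals :: 'a set set)"
  proof (rule inj_onI)
    fix I J :: "'a set"
    assume "I \<in> order_ideals" "J \<in> order_ideals" "rowmotion I = rowmotion J"
    then show "I = J"
      using order_ideal_eq_not_above_mins_compl maxs_rowmotion by metis
  qed
  moreover have "rowmotion ` order_ideals \<subseteq> order_ideals"
    using rowmotion_in_order_ideals by blast
  moreover have "finite (order_ideals :: 'a set set)"
    by (rule finite_subset[OF subset_UNIV finite_UNIV])
  ultimately show ?thesis
    unfolding bij_betw_def using endo_inj_surj by blast
qed

lemma bij_betw_funpow_periodic:
  assumes "bij_betw f A A" "finite A" "x \<in> A"
  obtains k where "k > 0" "(f ^^ k) x = x"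
proof -
  have "(\<lambda>n. (f ^^ n) x) ` UNIV \<subseteq> A"
    using bij_betw_funpow[OF assms(1)] assms(3) bij_betwE by blast
  then have "\<not> inj (\<lambda>n. (f ^^ n) x)"
    using assms(2) finite_imageD finite_subset infinite_UNIV_nat by blast
  then obtain i j where "i < j" "(f ^^ i) x = (f ^^ j) x"
    unfolding inj_def by (metis linorder_neqE_nat)
  then have "(f ^^ i) ((f ^^ (j - i)) x) = (f ^^ i) x"
    by (metis funpow_add le_add_diff_inverse less_imp_le o_apply)
  moreover have "(f ^^ (j - i)) x \<in> A"
    using bij_betw_funpow[OF assms(1)] assms(3) bij_betwE by blast
  ultimately have "(f ^^ (j - i)) x = x"
    using bij_betw_funpow[OF assms(1), of i] assms(3) by (auto dest: bij_betw_imp_inj_on inj_onD)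
  with \<open>i < j\<close> show thesis
    by (intro that[of "j - i"]) auto
qed

lemma rm_orbit_of_funpow:
  fixes I :: "'a::{order,finite} set"
  assumes "I \<in> order_ideals"
  shows "rm_orbit_of ((rowmotion ^^ m) I) = rm_orbit_of I"
proof -
  obtain k where "k > 0" and period: "(rowmotion ^^ k) I = I"
    using bij_betw_funpow_periodic[OF bij_betw_rowmotion _ assms] by auto
  have forward: "(rowmotion ^^ n) ((rowmotion ^^ m) I) = (rowmotion ^^ (n + m)) I" for n
    by (simp add: funpow_add)
  have backward: "(rowmotion ^^ n) I = (rowmotion ^^ (n + k * m - m)) ((rowmotion ^^ m) I)" for n
  proof -
    have "m \<le> k * m"
      using \<open>k > 0\<close> by simp
    then have "n + k * m - m + m = n + k * m"
      by linarith
    then have "(rowmotion ^^ (n + k * m - m)) ((rowmotion ^^ m) I) = (rowmotion ^^ (n + k * m)) I"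
      unfolding forward by simp
    also have "\<dots> = (rowmotion ^^ n) I"
      using funpow_mod_eq[OF period, of "n + k * m"] funpow_mod_eq[OF period, of n] by simp
    finally show ?thesis ..
  qed
  show ?thesis
    unfolding rm_orbit_of_def using forward backward by blast
qed

lemma rm_orbit_of_eq:
  fixes I :: "'a::{order,finite} set"
  assumes "I \<in> order_ideals" "J \<in> rm_orbit_of I"
  shows "rm_orbit_of J = rm_orbit_of I"
  using assms rm_orbit_of_funpow unfolding rm_orbit_of_def by blast

lemma is_rm_orbit_eq:
  fixes J :: "'a::{order,finite} set"
  assumes "is_rm_orbit Orb" "J \<in> Orb"
  shows "Orb = rm_orbit_of J"
  using assms rm_orbit_of_eq unfolding is_rm_orbit_def by metis

lemma rm_orbit_of_subset_order_ideals:
  "I \<in> order_ideals \<Longrightarrow> rm_orbit_of I \<subseteq> order_ideals"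
  unfolding rm_orbit_of_def using funpow_rowmotion_in_order_ideals by blast

lemma self_in_rm_orbit_of: "I \<in> rm_orbit_of I"
  unfolding rm_orbit_of_def by (auto intro: exI[of _ 0])

locale order_reversing_involution =
  fixes \<kappa> :: "'a::{order,finite} \<Rightarrow> 'a"
  assumes involution: "\<kappa> (\<kappa> x) = x"
    and antimono: "x \<le> y \<Longrightarrow> \<kappa> y \<le> \<kappa> x"
begin

definition dual_ideal :: "'a set \<Rightarrow> 'a set" where
  "dual_ideal I = ideal_gen (\<kappa> ` maxs I)"

lemma le_iff [simp]: "\<kappa> x \<le> \<kappa> y \<longleftrightarrow> y \<le> x"
  using antimono[of "\<kappa> x" "\<kappa> y"] antimono[of y x] by (auto simp: involution)

lemma bij: "bij \<kappa>"
  by (rule o_bij[of \<kappa>]) (simp_all add: fun_eq_iff involution)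

lemma mem_image_iff: "x \<in> \<kappa> ` S \<longleftrightarrow> \<kappa> x \<in> S"
  by (metis image_iff involution)

lemma maxs_image: "maxs (\<kappa> ` S) = \<kappa> ` mins S"
  unfolding maxs_def mins_def by (auto simp: mem_image_iff involution) (metis involution le_iff)

lemma mins_image: "mins (\<kappa> ` S) = \<kappa> ` maxs S"
  unfolding maxs_def mins_def by (auto simp: mem_image_iff involution) (metis involution le_iff)

lemma compl_image_in_order_ideals:
  "I \<in> order_ideals \<Longrightarrow> UNIV - \<kappa> ` I \<in> order_ideals"
  unfolding order_ideals_def by (auto simp: mem_image_iff)

lemma dual_ideal_in_order_ideals: "dual_ideal I \<in> order_ideals"
  unfolding dual_ideal_def by (rule ideal_gen_in_order_ideals)

lemma maxs_dual_ideal: "maxs (dual_ideal I) = \<kappa> ` maxs I"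
  unfolding dual_ideal_def by (simp add: maxs_ideal_gen maxs_image mins_maxs)

lemma dual_ideal_dual_ideal: "I \<in> order_ideals \<Longrightarrow> dual_ideal (dual_ideal I) = I"
  unfolding dual_ideal_def[of "dual_ideal I"] maxs_dual_ideal
  by (simp add: image_image involution ideal_gen_maxs)

lemma chi_dual_ideal: "chi q (dual_ideal I) = chi (\<kappa> q) I"
  unfolding chi_def by (simp add: maxs_dual_ideal mem_image_iff)

lemma dual_ideal_rowmotion:
  assumes "I \<in> order_ideals"
  shows "dual_ideal (rowmotion I) = UNIV - \<kappa> ` I"
proof -
  have "dual_ideal (rowmotion I) = ideal_gen (maxs (\<kappa> ` (UNIV - I)))"
    unfolding dual_ideal_def maxs_rowmotion maxs_image ..
  also have "\<kappa> ` (UNIV - I) = UNIV - \<kappa> ` I"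
    using bij_image_Compl_eq[OF bij] by (simp add: Compl_eq_Diff_UNIV)
  finally show ?thesis
    using ideal_gen_maxs[OF compl_image_in_order_ideals[OF assms]] by simp
qed

lemma rowmotion_compl_image: "rowmotion (UNIV - \<kappa> ` I) = dual_ideal I"
  unfolding rowmotion_def dual_ideal_def by (simp add: Diff_Diff_Int mins_image)

lemma rowmotion_dual_ideal_rowmotion:
  "I \<in> order_ideals \<Longrightarrow> rowmotion (dual_ideal (rowmotion I)) = dual_ideal I"
  by (simp add: dual_ideal_rowmotion rowmotion_compl_image)

lemma funpow_rowmotion_dual_ideal_funpow_rowmotion:
  "I \<in> order_ideals \<Longrightarrow>
    (rowmotion ^^ n) (dual_ideal ((rowmotion ^^ n) I)) = dual_ideal I"
proof (induction n)
  case 0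
  then show ?case by simp
next
  case (Suc n)
  have "(rowmotion ^^ Suc n) (dual_ideal ((rowmotion ^^ Suc n) I))
      = (rowmotion ^^ n) (rowmotion (dual_ideal (rowmotion ((rowmotion ^^ n) I))))"
    by (simp add: funpow_swap1)
  also have "\<dots> = (rowmotion ^^ n) (dual_ideal ((rowmotion ^^ n) I))"
    using Suc.prems by (simp add: rowmotion_dual_ideal_rowmotion funpow_rowmotion_in_order_ideals)
  finally show ?case
    using Suc by simp
qed

lemma dual_ideal_image_rm_orbit_subset:
  assumes "I \<in> order_ideals"
  shows "dual_ideal ` rm_orbit_of I \<subseteq> rm_orbit_of (dual_ideal I)"
proof
  fix J assume "J \<in> dual_ideal ` rm_orbit_of I"
  then obtain n where J: "J = dual_ideal ((rowmotion ^^ n) I)"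
    unfolding rm_orbit_of_def by blast
  have "dual_ideal I \<in> rm_orbit_of J"
    unfolding J rm_orbit_of_def
    using funpow_rowmotion_dual_ideal_funpow_rowmotion[OF assms, of n, symmetric] by blast
  then have "rm_orbit_of (dual_ideal I) = rm_orbit_of J"
    using J dual_ideal_in_order_ideals rm_orbit_of_eq by blast
  then show "J \<in> rm_orbit_of (dual_ideal I)"
    using self_in_rm_orbit_of by blast
qed

lemma dual_ideal_image_rm_orbit:
  assumes "I \<in> order_ideals"
  shows "dual_ideal ` rm_orbit_of I = rm_orbit_of (dual_ideal I)"
proof
  show "dual_ideal ` rm_orbit_of I \<subseteq> rm_orbit_of (dual_ideal I)"
    using dual_ideal_image_rm_orbit_subset[OF assms] .
  have "dual_ideal ` rm_orbit_of (dual_ideal I) \<subseteq> rm_orbit_of I"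
    using dual_ideal_image_rm_orbit_subset[OF dual_ideal_in_order_ideals[of I]]
    by (simp add: dual_ideal_dual_ideal[OF assms])
  then have "dual_ideal ` dual_ideal ` rm_orbit_of (dual_ideal I) \<subseteq> dual_ideal ` rm_orbit_of I"
    by (rule image_mono)
  moreover have "dual_ideal ` dual_ideal ` rm_orbit_of (dual_ideal I) = rm_orbit_of (dual_ideal I)"
    using rm_orbit_of_subset_order_ideals[OF dual_ideal_in_order_ideals]
    by (force simp: image_image dual_ideal_dual_ideal)
  ultimately show "rm_orbit_of (dual_ideal I) \<subseteq> dual_ideal ` rm_orbit_of I"
    by simp
qed

lemma inj_on_dual_ideal: "inj_on dual_ideal order_ideals"
  by (metis inj_onI dual_ideal_dual_ideal)

lemma card_rm_orbit_dual_ideal: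
  "I \<in> order_ideals \<Longrightarrow> card (rm_orbit_of (dual_ideal I)) = card (rm_orbit_of I)"
  using dual_ideal_image_rm_orbit card_image
    inj_on_subset[OF inj_on_dual_ideal rm_orbit_of_subset_order_ideals] by metis

lemma chi_diff_sum_rm_orbit_dual_ideal:
  assumes "I \<in> order_ideals"
  shows "chi_diff_sum q (\<kappa> q) (rm_orbit_of (dual_ideal I))
    = - chi_diff_sum q (\<kappa> q) (rm_orbit_of I)"
proof -
  have "chi_diff_sum q (\<kappa> q) (rm_orbit_of (dual_ideal I))
      = (\<Sum>J\<in>rm_orbit_of I. chi q (dual_ideal J) - chi (\<kappa> q) (dual_ideal J))"
    unfolding chi_diff_sum_def dual_ideal_image_rm_orbit[OF assms, symmetric]
    using inj_on_subset[OF inj_on_dual_ideal rm_orbit_of_subset_order_ideals[OF assms]]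
    by (simp add: sum.reindex)
  also have "\<dots> = (\<Sum>J\<in>rm_orbit_of I. chi (\<kappa> q) J - chi q J)"
    by (simp add: chi_dual_ideal involution)
  finally show ?thesis
    unfolding chi_diff_sum_def by (simp add: sum_subtractf)
qed

end

theorem corollary5p14:
  fixes \<kappa> :: "'a::{order,finite} \<Rightarrow> 'a"
    and I :: "'a set" and l :: 'a
  assumes invol: "\<And>x. \<kappa> (\<kappa> x) = x"
    and rev: "\<And>x y. x \<le> y \<Longrightarrow> \<kappa> y \<le> \<kappa> x"
    and I: "I \<in> order_ideals"
  shows "(\<forall>Orb. is_rm_orbit Orb \<longrightarrow> I \<in> Orb \<longrightarrow> ideal_gen (\<kappa> ` maxs I) \<in> Orb
            \<longrightarrow> chi_diff_sum l (\<kappa> l) Orb = 0)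
       \<and> (\<forall>Orb Orb'. is_rm_orbit Orb \<longrightarrow> is_rm_orbit Orb' \<longrightarrow> I \<in> Orb
            \<longrightarrow> ideal_gen (\<kappa> ` maxs I) \<in> Orb' \<longrightarrow> Orb \<noteq> Orb'
            \<longrightarrow> card Orb = card Orb' \<and> chi_diff_sum l (\<kappa> l) Orb + chi_diff_sum l (\<kappa> l) Orb' = 0)"
proof -
  interpret order_reversing_involution \<kappa>
    using invol rev by unfold_locales
  have I': "ideal_gen (\<kappa> ` maxs I) = dual_ideal I"
    unfolding dual_ideal_def ..
  note sum = chi_diff_sum_rm_orbit_dual_ideal[OF I, of l]
  note card = card_rm_orbit_dual_ideal[OF I]
  show ?thesis
  proof (intro conjI allI impI)
    fix Orb assume "is_rm_orbit Orb" "I \<in> Orb" "ideal_gen (\<kappa> ` maxs I) \<in> Orb"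
    then have "Orb = rm_orbit_of I" "Orb = rm_orbit_of (dual_ideal I)"
      using is_rm_orbit_eq I' by metis+
    then show "chi_diff_sum l (\<kappa> l) Orb = 0"
      using sum by simp
  next
    fix Orb Orb' assume "is_rm_orbit Orb" "is_rm_orbit Orb'" "I \<in> Orb"
      "ideal_gen (\<kappa> ` maxs I) \<in> Orb'"
    then have "Orb = rm_orbit_of I" "Orb' = rm_orbit_of (dual_ideal I)"
      using is_rm_orbit_eq I' by metis+
    then show "card Orb = card Orb'"
      "chi_diff_sum l (\<kappa> l) Orb + chi_diff_sum l (\<kappa> l) Orb' = 0"
      using sum card by simp_all
  qed
qed

end
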